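(* Let $u$ be a smooth function on $\overline\Omega$ such that $-\partial_{xx}u+L(u)+c(x)u\ge0$ in $\Omega$, where $c$ is a non-negative bounded smooth function. If there exists $x_0\in\partial\Omega$ such that $\min_{x\in\Omega}u(x)=u(x_0)<0$, then either $u$ is constant or $\partial_{\nu_x}u(x_0)<0$, where $\nu_x$ is the exterior normal.
   Context: $\Omega=\bigcup_{i=1}^m ]a_i,b_i[\subset\mathbb{R}$ with $a_1<b_1<\dots<a_m<b_m$; $K$ is a $C^1$ even function with $K>0$, $0<c_K<K<C_K$, $|K'|<C_K$; $L\phi(x)=\int_\Omega[\phi(x)-\phi(y)]K(x-y)dy$. *)

theory Defs
  imports "HOL-Analysis.Analysis"
begin

definition smooth_within :: "(real \<Rightarrow> real) \<Rightarrow> real set \<Rightarrow> bool" where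
  "smooth_within f S \<longleftrightarrow>
     (\<exists>D :: nat \<Rightarrow> real \<Rightarrow> real. (\<forall>x\<in>S. D 0 x = f x) \<and>
        (\<forall>n. \<forall>x\<in>S. (D n has_real_derivative D (Suc n) x) (at x within S)))"

definition Omega :: "nat \<Rightarrow> (nat \<Rightarrow> real) \<Rightarrow> (nat \<Rightarrow> real) \<Rightarrow> real set" where
  "Omega m a b = (\<Union>i<m. {a i<..<b i})"

definition nonlocal_L :: "(real \<Rightarrow> real) \<Rightarrow> real set \<Rightarrow> (real \<Rightarrow> real) \<Rightarrow> real \<Rightarrow> real" where
  "nonlocal_L K \<Omega> \<phi> x = integral \<Omega> (\<lambda>y. (\<phi> x - \<phi> y) * K (x - y))"

end

theory Submission
  imports Defs
begin

text \<open>
  At a boundary minimum x0 with u'(x0) nonzero, minimality fixes the sign of u'(x0). So suppose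
  u'(x0) = 0 and, say, x0 = a i (the right endpoint is the mirror image under x \<mapsto> -x).
  Near x0 we have u < 0, hence c u \<le> 0, and since u \<ge> u x0 on \<Omega> the nonlocal term is at
  most A (u - u x0) with A = CK |\<Omega>|. Thus w = u - u x0 \<ge> 0 satisfies w'' \<le> A w and
  w(x0) = w'(x0) = 0, and the second-order mean value theorem at a maximum point of w on a short
  interval [x0, x0 + \<delta>] shows w = 0 there. Inside that interval u'' = 0 and c u \<le> 0, so
  L u \<ge> 0 at a minimum point x of u; as the integrand (u y - u x) K (x - y) of -L u x is
  continuous and nonnegative, u is constant on \<Omega>.
\<close>

lemma smooth_within_imp_continuous_on:
  assumes "smooth_within f S"
  shows "continuous_on S f"
proof -
  obtain D where D0: "\<forall>x\<in>S. D 0 x = f x"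
    and D: "\<forall>n. \<forall>x\<in>S. (D n has_real_derivative D (Suc n) x) (at x within S)"
    using assms unfolding smooth_within_def by blast
  have "continuous_on S (D 0)"
    using D by (intro DERIV_continuous_on) blast
  then show ?thesis
    using D0 continuous_on_cong by blast
qed

lemma smooth_within_Icc_twice_differentiable:
  assumes "smooth_within f {p..q}"
  obtains f1 f2 where
    "\<And>x. x \<in> {p..q} \<Longrightarrow> (f has_real_derivative f1 x) (at x within {p..q})"
    "\<And>x. x \<in> {p..q} \<Longrightarrow> (f1 has_real_derivative f2 x) (at x within {p..q})"
    "\<And>x. x \<in> {p<..<q} \<Longrightarrow> deriv (deriv f) x = f2 x"
proof -
  obtain D where D0: "\<forall>x\<in>{p..q}. D 0 x = f x"
    and D: "\<forall>n. \<forall>x\<in>{p..q}. (D n has_real_derivative D (Suc n) x) (at x within {p..q})"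
    using assms unfolding smooth_within_def by blast
  have f1: "(f has_real_derivative D 1 x) (at x within {p..q})" if "x \<in> {p..q}" for x
    by (rule has_field_derivative_transform_within[of "D 0" _ x _ 1]) (use D D0 that in auto)
  have f2: "(D 1 has_real_derivative D 2 x) (at x within {p..q})" if "x \<in> {p..q}" for x
    using D that by (metis One_nat_def Suc_1)
  have "deriv (deriv f) x = D 2 x" if x: "x \<in> {p<..<q}" for x
  proof -
    have deriv_f: "deriv f y = D 1 y" if "y \<in> {p<..<q}" for y
      using f1[of y] that at_within_Icc_at[of p y q] by (auto intro: DERIV_imp_deriv)
    have "(deriv f has_real_derivative D 2 x) (at x)"
      by (rule has_field_derivative_transform_within_open[of "D 1" _ x "{p<..<q}"])
        (use f2[of x] x at_within_Icc_at[of p x q] deriv_f in auto)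
    then show ?thesis
      by (rule DERIV_imp_deriv)
  qed
  then show ?thesis
    using that f1 f2 by blast
qed

lemma deriv_deriv_eq_0_if_locally_constant:
  fixes f :: "real \<Rightarrow> real"
  assumes "open T" "x \<in> T" "\<And>z. z \<in> T \<Longrightarrow> f z = k"
  shows "deriv (deriv f) x = 0"
proof -
  have "deriv f z = 0" if "z \<in> T" for z
  proof -
    have "eventually (\<lambda>y. f y = k) (nhds z)"
      using assms(1,3) that eventually_nhds by blast
    then show ?thesis
      by (simp add: deriv_cong_ev[of f "\<lambda>_. k" z z])
  qed
  then have "eventually (\<lambda>y. deriv f y = 0) (nhds x)"
    using assms(1,2) eventually_nhds by blast
  then show ?thesis
    by (simp add: deriv_cong_ev[of "deriv f" "\<lambda>_. 0" x x])
qed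

lemma Icc_left_endpoint_minimum_imp_deriv_nonneg:
  fixes f :: "real \<Rightarrow> real"
  assumes "p < q" and f: "(f has_real_derivative d) (at p within {p..q})"
    and min: "\<And>x. x \<in> {p<..<q} \<Longrightarrow> f p \<le> f x"
  shows "0 \<le> d"
proof -
  have "((\<lambda>y. (f y - f p) / (y - p)) \<longlongrightarrow> d) (at_right p)"
    using f \<open>p < q\<close> unfolding has_field_derivative_iff by (simp add: at_within_Icc_at_right)
  moreover have "eventually (\<lambda>y. 0 \<le> (f y - f p) / (y - p)) (at_right p)"
    unfolding eventually_at_right_field using \<open>p < q\<close> min by (intro exI[of _ q]) auto
  ultimately show ?thesis
    by (rule tendsto_lowerbound) simp
qed

lemma second_order_mean_value_left:
  fixes w w1 w2 :: "real \<Rightarrow> real"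
  assumes "p < s"
    and w1: "\<And>x. x \<in> {p..s} \<Longrightarrow> (w has_real_derivative w1 x) (at x within {p..s})"
    and w2: "\<And>x. x \<in> {p..s} \<Longrightarrow> (w1 has_real_derivative w2 x) (at x within {p..s})"
    and "w p = 0" "w1 p = 0"
  shows "\<exists>\<eta>\<in>{p<..<s}. \<exists>k\<in>{0..(s - p)\<^sup>2}. w s = k * w2 \<eta>"
proof -
  have "\<exists>\<xi>\<in>{p<..<s}. w s - w p = w1 \<xi> * (s - p)"
    by (rule mvt_simple[OF \<open>p < s\<close>, of w "\<lambda>x. (*) (w1 x)"])
      (use w1 in \<open>simp add: has_field_derivative_def\<close>)
  then obtain \<xi> where \<xi>: "\<xi> \<in> {p<..<s}" "w s - w p = w1 \<xi> * (s - p)"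
    by blast
  then have "\<exists>\<eta>\<in>{p<..<\<xi>}. w1 \<xi> - w1 p = w2 \<eta> * (\<xi> - p)"
  proof (intro mvt_simple[of p \<xi> w1 "\<lambda>x. (*) (w2 x)"])
    show "(w1 has_derivative (*) (w2 x)) (at x within {p..\<xi>})" if "p \<le> x" "x \<le> \<xi>" for x
      using DERIV_subset[OF w2[of x], of "{p..\<xi>}"] that \<xi>(1)
      unfolding has_field_derivative_def by simp
  qed simp
  then obtain \<eta> where \<eta>: "\<eta> \<in> {p<..<\<xi>}" "w1 \<xi> - w1 p = w2 \<eta> * (\<xi> - p)"
    by blast
  define k where "k = (\<xi> - p) * (s - p)"
  have "k \<in> {0..(s - p)\<^sup>2}"
    using \<xi>(1) mult_right_mono[of "\<xi> - p" "s - p" "s - p"] by (simp add: k_def power2_eq_square)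
  moreover have "w s = k * w2 \<eta>"
    using \<xi>(2) \<eta>(2) \<open>w p = 0\<close> \<open>w1 p = 0\<close> by (simp add: k_def)
  moreover have "\<eta> \<in> {p<..<s}"
    using \<eta>(1) \<xi>(1) by simp
  ultimately show ?thesis
    by blast
qed

lemma second_order_subsolution_vanishes_on_short_interval:
  fixes w w1 w2 :: "real \<Rightarrow> real"
  assumes "p < r"
    and w1: "\<And>x. x \<in> {p..r} \<Longrightarrow> (w has_real_derivative w1 x) (at x within {p..r})"
    and w2: "\<And>x. x \<in> {p..r} \<Longrightarrow> (w1 has_real_derivative w2 x) (at x within {p..r})"
    and "w p = 0" "w1 p = 0"
    and nonneg: "\<And>x. x \<in> {p..r} \<Longrightarrow> 0 \<le> w x"
    and sub: "\<And>x. x \<in> {p<..<r} \<Longrightarrow> w2 x \<le> A * w x"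
    and short: "\<bar>A\<bar> * (r - p)\<^sup>2 < 1"
    and x: "x \<in> {p..r}"
  shows "w x = 0"
proof -
  have "{p..r} \<noteq> {}"
    using \<open>p < r\<close> by simp
  then obtain s where s: "s \<in> {p..r}" and smax: "\<And>y. y \<in> {p..r} \<Longrightarrow> w y \<le> w s"
    using continuous_attains_sup[OF compact_Icc _ DERIV_continuous_on[OF w1]] by blast
  \<comment> \<open>At a maximum point s, two mean value steps give w s \<le> \<bar>A\<bar> (r - p)^2 w s.\<close>
  have "w s = 0"
  proof (cases "s = p")
    case False
    then have ps: "p < s" "{p..s} \<subseteq> {p..r}"
      using s by auto
    have "\<exists>\<eta>\<in>{p<..<s}. \<exists>k\<in>{0..(s - p)\<^sup>2}. w s = k * w2 \<eta>"
      by (rule second_order_mean_value_left[of p s w w1 w2, OF ps(1) _ _ \<open>w p = 0\<close> \<open>w1 p = 0\<close>])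
        (use DERIV_subset[OF w1 ps(2)] DERIV_subset[OF w2 ps(2)] ps(2) in blast)+
    then obtain \<eta> k where \<eta>: "\<eta> \<in> {p<..<s}" and k: "k \<in> {0..(s - p)\<^sup>2}" and ws: "w s = k * w2 \<eta>"
      by blast
    have s_nonneg: "0 \<le> w s"
      using nonneg s by blast
    have "w2 \<eta> \<le> A * w \<eta>"
      using sub \<eta> s by auto
    also have "\<dots> \<le> \<bar>A\<bar> * w \<eta>"
      using nonneg[of \<eta>] \<eta> s by (intro mult_right_mono) auto
    also have "\<dots> \<le> \<bar>A\<bar> * w s"
      using smax[of \<eta>] \<eta> s by (intro mult_left_mono) auto
    finally have "k * w2 \<eta> \<le> k * (\<bar>A\<bar> * w s)"
      using k by (intro mult_left_mono) auto
    then have "w s \<le> k * (\<bar>A\<bar> * w s)"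
      by (simp only: ws)
    also have "\<dots> \<le> (r - p)\<^sup>2 * (\<bar>A\<bar> * w s)"
    proof (rule mult_right_mono)
      have "(s - p)\<^sup>2 \<le> (r - p)\<^sup>2"
        using s by (intro power_mono) auto
      then show "k \<le> (r - p)\<^sup>2"
        using k by simp
    qed (use s_nonneg in simp)
    finally have "(1 - \<bar>A\<bar> * (r - p)\<^sup>2) * w s \<le> 0"
      by (simp add: algebra_simps)
    then show ?thesis
      using short s_nonneg by (simp add: mult_le_0_iff)
  qed (use \<open>w p = 0\<close> in simp)
  then show ?thesis
    using smax[OF x] nonneg[OF x] by simp
qed

lemma second_order_subsolution_vanishes_near_left_endpoint:
  fixes w w1 w2 :: "real \<Rightarrow> real"
  assumes "p < q"
    and w1: "\<And>x. x \<in> {p..q} \<Longrightarrow> (w has_real_derivative w1 x) (at x within {p..q})"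
    and w2: "\<And>x. x \<in> {p..q} \<Longrightarrow> (w1 has_real_derivative w2 x) (at x within {p..q})"
    and "w p = 0" "w1 p = 0"
    and nonneg: "\<And>x. x \<in> {p..q} \<Longrightarrow> 0 \<le> w x"
    and sub: "\<And>x. x \<in> {p<..<q} \<Longrightarrow> w2 x \<le> A * w x"
  shows "\<exists>r\<in>{p<..q}. \<forall>x\<in>{p..r}. w x = 0"
proof -
  define r where "r = p + min (q - p) (1 / (\<bar>A\<bar> + 1))"
  have r: "p < r" "r \<le> q" "{p..r} \<subseteq> {p..q}"
    using \<open>p < q\<close> by (auto simp: r_def)
  have "r - p \<le> 1 / (\<bar>A\<bar> + 1)"
    by (simp add: r_def)
  then have "(\<bar>A\<bar> + 1) * (r - p) \<le> 1"
    by (simp add: field_simps)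
  with r(1) have "((\<bar>A\<bar> + 1) * (r - p))\<^sup>2 \<le> 1"
    by (intro power_le_one) simp_all
  moreover have "\<bar>A\<bar> * (r - p)\<^sup>2 < ((\<bar>A\<bar> + 1) * (r - p))\<^sup>2"
  proof -
    have "\<bar>A\<bar> + 1 \<le> (\<bar>A\<bar> + 1)\<^sup>2"
      by (rule self_le_power) simp_all
    then have "\<bar>A\<bar> < (\<bar>A\<bar> + 1)\<^sup>2"
      by linarith
    then show ?thesis
      using r(1) unfolding power_mult_distrib by (intro mult_strict_right_mono) simp_all
  qed
  ultimately have short: "\<bar>A\<bar> * (r - p)\<^sup>2 < 1"
    by linarith
  have "w x = 0" if "x \<in> {p..r}" for x
  proof (rule second_order_subsolution_vanishes_on_short_interval[of p r w w1 w2, OF r(1) _ _ \<open>w p = 0\<close> \<open>w1 p = 0\<close> _ _ short that])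
    show "(w has_real_derivative w1 y) (at y within {p..r})" if "y \<in> {p..r}" for y
      using DERIV_subset[OF w1 r(3)] that r(3) by blast
    show "(w1 has_real_derivative w2 y) (at y within {p..r})" if "y \<in> {p..r}" for y
      using DERIV_subset[OF w2 r(3)] that r(3) by blast
    show "0 \<le> w y" if "y \<in> {p..r}" for y
      using nonneg that r(3) by blast
    show "w2 y \<le> A * w y" if "y \<in> {p<..<r}" for y
      using sub that r(2) by simp
  qed
  with r(1,2) show ?thesis
    by (intro bexI[of _ r]) auto
qed

lemma continuous_on_Icc_neg_near_left_endpoint:
  fixes f :: "real \<Rightarrow> real"
  assumes cont: "continuous_on {p..q} f" and "p < q" and neg: "f p < 0"
  obtains r where "p < r" "r < q" "\<And>x. x \<in> {p..r} \<Longrightarrow> f x < 0"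
proof -
  have "p \<in> {p..q}"
    using \<open>p < q\<close> by simp
  then have "(f \<longlongrightarrow> f p) (at p within {p..q})"
    using cont unfolding continuous_on_def by blast
  then have "eventually (\<lambda>x. f x < 0) (at p within {p..q})"
    using neg by (rule order_tendstoD(2))
  then obtain d where d: "d > 0" "\<forall>x\<in>{p..q}. x \<noteq> p \<and> dist x p < d \<longrightarrow> f x < 0"
    unfolding eventually_at by blast
  define r where "r = min ((p + q) / 2) (p + d / 2)"
  have r: "p < r" "r < q" "r - p < d"
    using d(1) \<open>p < q\<close> unfolding r_def by (simp_all add: min_def)
  have "f x < 0" if "x \<in> {p..r}" for x
    using that neg d(2) r by (cases "x = p") (auto simp: dist_real_def)
  with r show ?thesis
    using that by blast
qed

lemma left_endpoint_minimum_dichotomy: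
  fixes u u1 u2 :: "real \<Rightarrow> real"
  assumes "p < q"
    and u1: "\<And>x. x \<in> {p..q} \<Longrightarrow> (u has_real_derivative u1 x) (at x within {p..q})"
    and u2: "\<And>x. x \<in> {p..q} \<Longrightarrow> (u1 has_real_derivative u2 x) (at x within {p..q})"
    and min: "\<And>x. x \<in> {p<..<q} \<Longrightarrow> u p \<le> u x" and neg: "u p < 0"
    and sub: "\<And>x. x \<in> {p<..<q} \<Longrightarrow> u x < 0 \<Longrightarrow> u2 x \<le> A * (u x - u p)"
  shows "0 < u1 p \<or> (\<exists>r\<in>{p<..q}. \<forall>x\<in>{p..r}. u x = u p)"
proof (cases "u1 p = 0")
  case False
  have "p \<in> {p..q}"
    using \<open>p < q\<close> by simp
  then have "0 \<le> u1 p"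
    using Icc_left_endpoint_minimum_imp_deriv_nonneg[OF \<open>p < q\<close> u1 min] by blast
  then show ?thesis
    using False by simp
next
  case True
  obtain r where r: "p < r" "r < q" and neg_r: "\<And>x. x \<in> {p..r} \<Longrightarrow> u x < 0"
    using continuous_on_Icc_neg_near_left_endpoint[OF DERIV_continuous_on[OF u1] \<open>p < q\<close> neg] by blast
  have "\<exists>r'\<in>{p<..r}. \<forall>x\<in>{p..r'}. u x - u p = 0"
  proof (rule second_order_subsolution_vanishes_near_left_endpoint[of p r _ u1 u2 A])
    show "((\<lambda>x. u x - u p) has_real_derivative u1 x) (at x within {p..r})" if "x \<in> {p..r}" for x
      using DERIV_diff[OF DERIV_subset[OF u1[of x], of "{p..r}"] DERIV_const[of "u p"]] that r by simp
    show "(u1 has_real_derivative u2 x) (at x within {p..r})" if "x \<in> {p..r}" for x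
      using DERIV_subset[OF u2[of x], of "{p..r}"] that r by simp
    show "0 \<le> u x - u p" if "x \<in> {p..r}" for x
      using min[of x] that r by (cases "x = p") auto
    show "u2 x \<le> A * (u x - u p)" if "x \<in> {p<..<r}" for x
      using sub[of x] neg_r[of x] that r by simp
  qed (use r True in simp_all)
  then obtain r' where r': "r' \<in> {p<..r}" and flat: "\<forall>x\<in>{p..r'}. u x - u p = 0"
    by blast
  have "r' \<in> {p<..q}"
    using r' r by simp
  moreover have "\<forall>x\<in>{p..r'}. u x = u p"
    using flat eq_iff_diff_eq_0 by blast
  ultimately show ?thesis
    by blast
qed

lemma has_real_derivative_reflect:
  assumes "(f has_real_derivative d) (at (- x) within {p..q})"
  shows "((\<lambda>x. f (- x)) has_real_derivative - d) (at x within {-q..-p})"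
proof -
  have "(f \<circ> uminus has_real_derivative d * -1) (at x within {-q..-p})"
    by (rule DERIV_image_chain) (use assms in \<open>auto intro!: derivative_eq_intros\<close>)
  then show ?thesis
    by (simp add: o_def)
qed

lemma right_endpoint_minimum_dichotomy:
  fixes u u1 u2 :: "real \<Rightarrow> real"
  assumes "p < q"
    and u1: "\<And>x. x \<in> {p..q} \<Longrightarrow> (u has_real_derivative u1 x) (at x within {p..q})"
    and u2: "\<And>x. x \<in> {p..q} \<Longrightarrow> (u1 has_real_derivative u2 x) (at x within {p..q})"
    and min: "\<And>x. x \<in> {p<..<q} \<Longrightarrow> u q \<le> u x" and neg: "u q < 0"
    and sub: "\<And>x. x \<in> {p<..<q} \<Longrightarrow> u x < 0 \<Longrightarrow> u2 x \<le> A * (u x - u q)"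
  shows "u1 q < 0 \<or> (\<exists>r\<in>{p..<q}. \<forall>x\<in>{r..q}. u x = u q)"
proof -
  have "0 < - u1 (- (- q)) \<or> (\<exists>r\<in>{-q<..-p}. \<forall>x\<in>{-q..r}. u (- x) = u (- (- q)))"
  proof (rule left_endpoint_minimum_dichotomy[of _ "-p" _ _ "\<lambda>x. u2 (- x)" A])
    show "((\<lambda>x. u (- x)) has_real_derivative - u1 (- x)) (at x within {-q..-p})"
      if "x \<in> {-q..-p}" for x
      using that by (intro has_real_derivative_reflect u1) auto
    show "((\<lambda>x. - u1 (- x)) has_real_derivative u2 (- x)) (at x within {-q..-p})"
      if "x \<in> {-q..-p}" for x
      using has_real_derivative_reflect[OF DERIV_minus[OF u2[of "- x"]]] that by auto
    show "u (- (- q)) \<le> u (- x)" if "x \<in> {-q<..<-p}" for x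
      using min[of "- x"] that by simp
    show "u2 (- x) \<le> A * (u (- x) - u (- (- q)))" if "x \<in> {-q<..<-p}" "u (- x) < 0" for x
      using sub[of "- x"] that by simp
  qed (use \<open>p < q\<close> neg in simp_all)
  then show ?thesis
  proof
    assume "\<exists>r\<in>{-q<..-p}. \<forall>x\<in>{-q..r}. u (- x) = u (- (- q))"
    then obtain r where r: "r \<in> {-q<..-p}" and flat: "\<And>x. x \<in> {-q..r} \<Longrightarrow> u (- x) = u q"
      by auto
    have "\<forall>x\<in>{-r..q}. u x = u q"
    proof
      fix x assume "x \<in> {-r..q}"
      then show "u x = u q"
        using flat[of "- x"] by simp
    qed
    moreover have "- r \<in> {p..<q}"
      using r by auto
    ultimately show ?thesis
      by blast
  qed simp
qed

lemma integrable_on_bounded_continuous: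
  fixes f :: "'a::euclidean_space \<Rightarrow> real"
  assumes S: "S \<in> lmeasurable" and f: "continuous_on S f" "bounded (f ` S)"
  shows "f integrable_on S"
proof -
  obtain B where B: "\<And>x. x \<in> S \<Longrightarrow> \<bar>f x\<bar> \<le> B"
    using f(2) unfolding bounded_iff by auto
  have "S \<in> sets lebesgue"
    using S by (simp add: fmeasurableD)
  then show ?thesis
    using continuous_imp_measurable_on_sets_lebesgue[OF f(1)] integrable_on_const[OF S] B
    by (intro measurable_bounded_by_integrable_imp_integrable_real[of f S "\<lambda>_. B"]) auto
qed

lemma continuous_nonneg_integral_nonpos_imp_zero:
  fixes g :: "real \<Rightarrow> real"
  assumes S: "open S" and g: "continuous_on S g" "g integrable_on S"
    and nonneg: "\<And>y. y \<in> S \<Longrightarrow> 0 \<le> g y" and nonpos: "integral S g \<le> 0" and y: "y \<in> S"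
  shows "g y = 0"
proof -
  obtain e where e: "e > 0" "cball y e \<subseteq> S"
    using S y open_contains_cball by blast
  then have I: "{y - e..y + e} \<subseteq> S"
    by (simp add: cball_eq_atLeastAtMost)
  have cont: "continuous_on {y - e..y + e} g"
    using g(1) I by (rule continuous_on_subset)
  then have int: "g integrable_on {y - e..y + e}"
    by (rule integrable_continuous_interval)
  have nonneg_I: "\<And>z. z \<in> {y - e..y + e} \<Longrightarrow> 0 \<le> g z"
    using nonneg I by blast
  have "integral {y - e..y + e} g \<le> integral S g"
    using integral_subset_le[OF I int g(2)] nonneg by blast
  moreover have "0 \<le> integral {y - e..y + e} g"
    by (rule integral_nonneg[OF int nonneg_I])
  ultimately have "integral {y - e..y + e} g = 0"
    using nonpos by linarith
  moreover have "y - e < y + e"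
    using e(1) by simp
  ultimately have "\<forall>z\<in>{y - e..y + e}. g z = 0"
    using integral_eq_0_iff[OF cont _ nonneg_I] by blast
  then show ?thesis
    using e(1) by simp
qed

locale nonlocal_setting =
  fixes \<Omega> :: "real set" and K :: "real \<Rightarrow> real" and C :: real and u :: "real \<Rightarrow> real"
  assumes open_domain: "open \<Omega>" and lmeasurable_domain: "\<Omega> \<in> lmeasurable"
    and u_continuous: "continuous_on \<Omega> u" and u_bounded: "bounded (u ` \<Omega>)"
    and K_continuous: "continuous_on UNIV K"
    and K_pos: "\<And>z. 0 < K z" and K_le: "\<And>z. K z \<le> C"
begin

lemma integrable_nonlocal_integrand: "(\<lambda>y. (u x - u y) * K (x - y)) integrable_on \<Omega>"
proof (rule integrable_on_bounded_continuous[OF lmeasurable_domain])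
  show "continuous_on \<Omega> (\<lambda>y. (u x - u y) * K (x - y))"
    by (intro continuous_intros u_continuous continuous_on_compose2[OF K_continuous]) auto
  obtain B where B: "\<And>y. y \<in> \<Omega> \<Longrightarrow> \<bar>u y\<bar> \<le> B"
    using u_bounded unfolding bounded_iff by auto
  have "\<bar>(u x - u y) * K (x - y)\<bar> \<le> (\<bar>u x\<bar> + B) * C" if "y \<in> \<Omega>" for y
    unfolding abs_mult using B[OF that] K_pos[of "x - y"] K_le[of "x - y"]
    by (intro mult_mono) auto
  then show "bounded ((\<lambda>y. (u x - u y) * K (x - y)) ` \<Omega>)"
    unfolding bounded_iff by auto
qed

lemma nonlocal_L_le:
  assumes min: "\<And>y. y \<in> \<Omega> \<Longrightarrow> m \<le> u y" and "m \<le> u x"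
  shows "nonlocal_L K \<Omega> u x \<le> C * measure lebesgue \<Omega> * (u x - m)"
proof -
  have "nonlocal_L K \<Omega> u x \<le> integral \<Omega> (\<lambda>y. (u x - m) * C)"
    unfolding nonlocal_L_def
  proof (rule integral_le[OF integrable_nonlocal_integrand integrable_on_const[OF lmeasurable_domain]])
    fix y assume "y \<in> \<Omega>"
    then have "(u x - u y) * K (x - y) \<le> (u x - m) * K (x - y)"
      using min K_pos[of "x - y"] by (intro mult_right_mono) auto
    also have "\<dots> \<le> (u x - m) * C"
      using \<open>m \<le> u x\<close> K_le by (intro mult_left_mono) auto
    finally show "(u x - u y) * K (x - y) \<le> (u x - m) * C" .
  qed
  also have "\<dots> = (u x - m) * C * integral \<Omega> (\<lambda>y. 1)"
    using integral_mult[OF integrable_on_const[OF lmeasurable_domain], of "(u x - m) * C" 1]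
    by (simp only: mult_1_right)
  also have "\<dots> = C * measure lebesgue \<Omega> * (u x - m)"
    by (simp add: lmeasure_integral[OF lmeasurable_domain])
  finally show ?thesis .
qed

lemma nonlocal_L_nonneg_at_minimum_imp_constant:
  assumes min: "\<And>y. y \<in> \<Omega> \<Longrightarrow> u x \<le> u y" and L: "0 \<le> nonlocal_L K \<Omega> u x" and y: "y \<in> \<Omega>"
  shows "u y = u x"
proof -
  define g where "g y = (u y - u x) * K (x - y)" for y
  have g_eq: "g = (\<lambda>y. - ((u x - u y) * K (x - y)))"
    unfolding g_def by (auto simp: algebra_simps)
  have "g y = 0"
  proof (rule continuous_nonneg_integral_nonpos_imp_zero[OF open_domain _ _ _ _ y])
    show "continuous_on \<Omega> g"
      unfolding g_def by (intro continuous_intros u_continuous continuous_on_compose2[OF K_continuous]) auto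
    show "g integrable_on \<Omega>"
      unfolding g_eq by (rule integrable_neg[OF integrable_nonlocal_integrand])
    show "integral \<Omega> g \<le> 0"
      using L unfolding g_eq nonlocal_L_def by simp
    show "0 \<le> g z" if "z \<in> \<Omega>" for z
      unfolding g_def using min[OF that] K_pos[of "x - z"] by simp
  qed
  then show ?thesis
    using K_pos[of "x - y"] unfolding g_def by simp
qed

end

locale nonlocal_supersolution = nonlocal_setting +
  fixes c :: "real \<Rightarrow> real"
  assumes c_nonneg: "\<And>x. x \<in> \<Omega> \<Longrightarrow> c x \<ge> 0"
    and supersolution: "\<And>x. x \<in> \<Omega> \<Longrightarrow> - deriv (deriv u) x + nonlocal_L K \<Omega> u x + c x * u x \<ge> 0"
begin

lemma second_derivative_le:
  assumes "\<And>y. y \<in> \<Omega> \<Longrightarrow> m \<le> u y" "x \<in> \<Omega>" "u x \<le> 0"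
  shows "deriv (deriv u) x \<le> C * measure lebesgue \<Omega> * (u x - m)"
proof -
  have "c x * u x \<le> 0"
    using c_nonneg assms(2,3) by (simp add: mult_nonneg_nonpos)
  then show ?thesis
    using supersolution[OF assms(2)] nonlocal_L_le[of m x] assms by fastforce
qed

lemma constant_if_minimal_on_interval:
  assumes min: "\<And>y. y \<in> \<Omega> \<Longrightarrow> m \<le> u y" and "m \<le> 0"
    and "\<alpha> < \<beta>" "{\<alpha><..<\<beta>} \<subseteq> \<Omega>" and flat: "\<And>z. z \<in> {\<alpha><..<\<beta>} \<Longrightarrow> u z = m"
    and y: "y \<in> \<Omega>"
  shows "u y = m"
proof -
  define x where "x = (\<alpha> + \<beta>) / 2"
  have x: "x \<in> {\<alpha><..<\<beta>}" "x \<in> \<Omega>"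
    using assms(3,4) by (auto simp: x_def)
  have "deriv (deriv u) x = 0"
    using deriv_deriv_eq_0_if_locally_constant[OF _ x(1) flat] by simp
  moreover have "c x * u x \<le> 0"
    using c_nonneg[OF x(2)] flat[OF x(1)] \<open>m \<le> 0\<close> by (simp add: mult_nonneg_nonpos)
  ultimately have "0 \<le> nonlocal_L K \<Omega> u x"
    using supersolution[OF x(2)] by linarith
  moreover have "\<And>z. z \<in> \<Omega> \<Longrightarrow> u x \<le> u z"
    using min flat[OF x(1)] by simp
  ultimately have "u y = u x"
    using nonlocal_L_nonneg_at_minimum_imp_constant y by blast
  then show ?thesis
    using flat[OF x(1)] by simp
qed

lemma hopf_left_endpoint:
  assumes "p < q" and sub: "{p<..<q} \<subseteq> \<Omega>" and smooth: "smooth_within u {p..q}"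
    and min: "\<And>y. y \<in> \<Omega> \<Longrightarrow> u p \<le> u y" and neg: "u p < 0"
  shows "(\<forall>y\<in>\<Omega>. u y = u p) \<or> (\<exists>d. (u has_real_derivative d) (at p within {p..q}) \<and> 0 < d)"
proof -
  obtain u1 u2 where
    u1: "\<And>x. x \<in> {p..q} \<Longrightarrow> (u has_real_derivative u1 x) (at x within {p..q})" and
    u2: "\<And>x. x \<in> {p..q} \<Longrightarrow> (u1 has_real_derivative u2 x) (at x within {p..q})" and
    u2_eq: "\<And>x. x \<in> {p<..<q} \<Longrightarrow> deriv (deriv u) x = u2 x"
    using smooth_within_Icc_twice_differentiable[OF smooth] by blast
  have "0 < u1 p \<or> (\<exists>r\<in>{p<..q}. \<forall>x\<in>{p..r}. u x = u p)"
  proof (rule left_endpoint_minimum_dichotomy[OF \<open>p < q\<close> u1 u2 _ neg])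
    show "u p \<le> u x" if "x \<in> {p<..<q}" for x
      using min sub that by blast
    show "u2 x \<le> C * measure lebesgue \<Omega> * (u x - u p)" if "x \<in> {p<..<q}" "u x < 0" for x
    proof -
      have "x \<in> \<Omega>"
        using sub that(1) by blast
      then show ?thesis
        using second_derivative_le[OF min _ less_imp_le[OF that(2)]] u2_eq[OF that(1)] by simp
    qed
  qed
  then show ?thesis
  proof
    assume "0 < u1 p"
    then show ?thesis
      using u1[of p] \<open>p < q\<close> by auto
  next
    assume "\<exists>r\<in>{p<..q}. \<forall>x\<in>{p..r}. u x = u p"
    then obtain r where r: "r \<in> {p<..q}" and flat: "\<forall>x\<in>{p..r}. u x = u p"
      by blast
    have "u y = u p" if "y \<in> \<Omega>" for y
    proof (rule constant_if_minimal_on_interval[OF min less_imp_le[OF neg] _ _ _ that])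
      show "p < r" "{p<..<r} \<subseteq> \<Omega>"
        using r sub by auto
      show "u z = u p" if "z \<in> {p<..<r}" for z
        using bspec[OF flat, of z] that by simp
    qed
    then show ?thesis
      by blast
  qed
qed

lemma hopf_right_endpoint:
  assumes "p < q" and sub: "{p<..<q} \<subseteq> \<Omega>" and smooth: "smooth_within u {p..q}"
    and min: "\<And>y. y \<in> \<Omega> \<Longrightarrow> u q \<le> u y" and neg: "u q < 0"
  shows "(\<forall>y\<in>\<Omega>. u y = u q) \<or> (\<exists>d. (u has_real_derivative d) (at q within {p..q}) \<and> d < 0)"
proof -
  obtain u1 u2 where
    u1: "\<And>x. x \<in> {p..q} \<Longrightarrow> (u has_real_derivative u1 x) (at x within {p..q})" and
    u2: "\<And>x. x \<in> {p..q} \<Longrightarrow> (u1 has_real_derivative u2 x) (at x within {p..q})" and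
    u2_eq: "\<And>x. x \<in> {p<..<q} \<Longrightarrow> deriv (deriv u) x = u2 x"
    using smooth_within_Icc_twice_differentiable[OF smooth] by blast
  have "u1 q < 0 \<or> (\<exists>r\<in>{p..<q}. \<forall>x\<in>{r..q}. u x = u q)"
  proof (rule right_endpoint_minimum_dichotomy[OF \<open>p < q\<close> u1 u2 _ neg])
    show "u q \<le> u x" if "x \<in> {p<..<q}" for x
      using min sub that by blast
    show "u2 x \<le> C * measure lebesgue \<Omega> * (u x - u q)" if "x \<in> {p<..<q}" "u x < 0" for x
    proof -
      have "x \<in> \<Omega>"
        using sub that(1) by blast
      then show ?thesis
        using second_derivative_le[OF min _ less_imp_le[OF that(2)]] u2_eq[OF that(1)] by simp
    qed
  qed
  then show ?thesis
  proof
    assume "u1 q < 0"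
    then show ?thesis
      using u1[of q] \<open>p < q\<close> by auto
  next
    assume "\<exists>r\<in>{p..<q}. \<forall>x\<in>{r..q}. u x = u q"
    then obtain r where r: "r \<in> {p..<q}" and flat: "\<forall>x\<in>{r..q}. u x = u q"
      by blast
    have "u y = u q" if "y \<in> \<Omega>" for y
    proof (rule constant_if_minimal_on_interval[OF min less_imp_le[OF neg] _ _ _ that])
      show "r < q" "{r<..<q} \<subseteq> \<Omega>"
        using r sub by auto
      show "u z = u q" if "z \<in> {r<..<q}" for z
        using bspec[OF flat, of z] that by simp
    qed
    then show ?thesis
      by blast
  qed
qed

end

lemma open_Omega: "open (Omega m a b)"
  unfolding Omega_def by auto

lemma Omega_lmeasurable: "Omega m a b \<in> lmeasurable"
  unfolding Omega_def by (intro lmeasurable_open bounded_UN open_UN) auto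

lemma Omega_continuous_bounded:
  assumes "\<And>j. j < m \<Longrightarrow> continuous_on {a j..b j} u"
  shows "continuous_on (Omega m a b) u" "bounded (u ` Omega m a b)"
proof -
  define U where "U = (\<Union>j<m. {a j..b j})"
  have sub: "Omega m a b \<subseteq> U"
    unfolding Omega_def U_def by auto
  have cont: "continuous_on U u"
    unfolding U_def by (rule continuous_on_closed_Union) (use assms in auto)
  then show "continuous_on (Omega m a b) u"
    using sub by (rule continuous_on_subset)
  have "compact (u ` U)"
    using cont unfolding U_def by (intro compact_continuous_image compact_UN) auto
  then show "bounded (u ` Omega m a b)"
    using sub by (meson bounded_subset compact_imp_bounded image_mono)
qed

theorem lemma4:
  fixes m :: nat and a b :: "nat \<Rightarrow> real"
    and K K' :: "real \<Rightarrow> real" and cK CK :: real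
    and u c :: "real \<Rightarrow> real" and x0 :: real and i :: nat
  assumes m_pos: "m \<ge> 1"
    and ab: "\<And>j. j < m \<Longrightarrow> a j < b j"
    and ba: "\<And>j. Suc j < m \<Longrightarrow> b j < a (Suc j)"
    and K_deriv: "\<And>x. (K has_real_derivative K' x) (at x)"
    and K'_cont: "continuous_on UNIV K'"
    and K_even: "\<And>x. K (- x) = K x"
    and K_pos: "\<And>x. K x > 0"
    and cK_pos: "0 < cK"
    and K_bounds: "\<And>x. cK < K x \<and> K x < CK"
    and K'_bound: "\<And>x. \<bar>K' x\<bar> < CK"
    and u_smooth: "\<And>j. j < m \<Longrightarrow> smooth_within u {a j..b j}"
    and c_smooth: "smooth_within c (Omega m a b)"
    and c_nonneg: "\<And>x. x \<in> Omega m a b \<Longrightarrow> c x \<ge> 0"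
    and c_bounded: "bounded (c ` Omega m a b)"
    and ineq: "\<And>x. x \<in> Omega m a b \<Longrightarrow>
       - deriv (deriv u) x + nonlocal_L K (Omega m a b) u x + c x * u x \<ge> 0"
    and i_lt: "i < m"
    and x0_bdry: "x0 = a i \<or> x0 = b i"
    and x0_min: "\<And>x. x \<in> Omega m a b \<Longrightarrow> u x0 \<le> u x"
    and u_neg: "u x0 < 0"
  shows "(\<exists>k. \<forall>x\<in>Omega m a b. u x = k) \<or>
         (x0 = a i \<longrightarrow> (\<exists>d. (u has_real_derivative d) (at x0 within {a i..b i}) \<and> - d < 0)) \<and>
         (x0 = b i \<longrightarrow> (\<exists>d. (u has_real_derivative d) (at x0 within {a i..b i}) \<and> d < 0))"
proof -
  have u_cont: "continuous_on {a j..b j} u" if "j < m" for j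
    using u_smooth[OF that] by (rule smooth_within_imp_continuous_on)
  have K_cont: "continuous_on UNIV K"
    by (rule DERIV_continuous_on) (rule K_deriv)
  interpret nonlocal_supersolution "Omega m a b" K CK u c
  proof unfold_locales
    show "K z \<le> CK" for z
      using K_bounds[of z] by simp
  qed (use open_Omega Omega_lmeasurable Omega_continuous_bounded[OF u_cont] K_cont K_pos c_nonneg
      ineq in auto)
  have sub: "{a i<..<b i} \<subseteq> Omega m a b"
    using i_lt unfolding Omega_def by auto
  from x0_bdry show ?thesis
  proof
    assume "x0 = a i"
    then show ?thesis
      using hopf_left_endpoint[OF ab[OF i_lt] sub u_smooth[OF i_lt]] x0_min u_neg ab[OF i_lt] by auto
  next
    assume "x0 = b i"
    then show ?thesis
      using hopf_right_endpoint[OF ab[OF i_lt] sub u_smooth[OF i_lt]] x0_min u_neg ab[OF i_lt] by auto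
  qed
qed

end
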